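(* Let $d$ and $m$ be positive integers, let $a_1=(a_{11},\ldots,a_{1k_1}),\ldots,a_m=(a_{m1},\ldots,a_{mk_m})$ be partitions of $d$ of lengths $k_1,\ldots,k_m$, and suppose that $t=k_1+\cdots+k_m-d(m-1)\geq 1$. Then there exist a partition $c=(c_1,\ldots,c_t)$ of $d$ of length $t$ and refinements $r_i:a_i\to c$ ($i=1,\ldots,m$) such that for each $j=1,\ldots,t$, the sum of the lengths of the partitions $r_1^{-1}(c_j),\ldots,r_m^{-1}(c_j)$ of $c_j$ equals $c_j(m-1)+1$.
   Context: A partition of $d$ is a multiset of positive integers summing to $d$; its length is its number of elements. For partitions $a$ and $b$ of $d$, a refinement $r:b\to a$ is a map of multisets such that for each part $a_i$ of $a$, the multiset $r^{-1}(a_i)$ is a partition of $a_i$. *)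

theory Defs
  imports Main
begin

text \<open>A partition of d is represented as a list of positive naturals (an enumeration
  of the multiset of parts) summing to d; its length is the list length.\<close>
definition is_partition :: "nat \<Rightarrow> nat list \<Rightarrow> bool" where
  "is_partition d p \<longleftrightarrow> (\<forall>x\<in>set p. 0 < x) \<and> sum_list p = d"

definition fiber :: "nat list \<Rightarrow> (nat \<Rightarrow> nat) \<Rightarrow> nat \<Rightarrow> nat list" where
  "fiber b r j = map (\<lambda>l. b ! l) (filter (\<lambda>l. r l = j) [0..<length b])"

definition is_refinement :: "nat list \<Rightarrow> nat list \<Rightarrow> (nat \<Rightarrow> nat) \<Rightarrow> bool" where
  "is_refinement b a r \<longleftrightarrow>
     (\<forall>l<length b. r l < length a) \<and>
     (\<forall>j<length a. is_partition (a ! j) (fiber b r j))"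

end

theory Submission
  imports Defs
begin

text \<open>For two partitions a, b of d with t = |a| + |b| - d \<ge> 1, walk along both partitions:
  there are prefixes a' of a and b' of b with a common sum e and |a'| + |b'| = e + 1,
  because over prefixes with equal sums the quantity |a'| + |b'| - e starts at 0, ends at t
  and increases by at most one at a time. These prefixes become the first part e of c, and
  the remaining parts of a and b are treated recursively.
  For m partitions one inducts on m: the common coarsening c' of a_1, ..., a_(m-1) is
  coarsened together with a_m to c. A part c_j is the image of l parts of c' of total size
  c_j, so the fibres of a_1, ..., a_(m-1) over c_j have c_j (m - 2) + l parts, and l plus the
  length of the fibre of a_m over c_j is c_j + 1.\<close>

lemma positive_sum_list_eq_0_iff:
  "\<forall>x\<in>set xs. 0 < (x::nat) \<Longrightarrow> sum_list xs = 0 \<longleftrightarrow> xs = []"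
  by (cases xs) auto

lemma length_le_sum_list:
  "\<forall>x\<in>set xs. 0 < (x::nat) \<Longrightarrow> length xs \<le> sum_list xs"
  by (induction xs) auto

lemma length_fiber: "length (fiber b r j) = card {l. l < length b \<and> r l = j}"
  unfolding fiber_def by (auto simp: length_filter_conv_card intro!: arg_cong[where f = card])

lemma sum_list_fiber: "sum_list (fiber b r j) = (\<Sum>l | l < length b \<and> r l = j. b ! l)"
proof -
  have "set (filter (\<lambda>l. r l = j) [0..<length b]) = {l. l < length b \<and> r l = j}"
    by auto
  then show ?thesis
    unfolding fiber_def by (simp add: sum_list_distinct_conv_sum_set)
qed

lemma set_fiber_subset: "set (fiber b r j) \<subseteq> set b"
  by (auto simp: fiber_def)

lemma fiber_const: "fiber b (\<lambda>_. 0) 0 = b"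
  by (simp add: fiber_def map_nth)

lemma fiber_id: "j < length b \<Longrightarrow> fiber b (\<lambda>l. l) j = [b ! j]"
proof -
  assume "j < length b"
  then have "[0..<length b] = [0..<j] @ j # [Suc j..<length b]"
    using upt_add_eq_append[of 0 j "length b - j"] upt_conv_Cons[of j "length b"] by simp
  then show ?thesis
    by (simp add: fiber_def filter_empty_conv)
qed

definition prepend_block :: "nat \<Rightarrow> (nat \<Rightarrow> nat) \<Rightarrow> nat \<Rightarrow> nat" where
  "prepend_block n r l = (if l < n then 0 else Suc (r (l - n)))"

lemma upt_add_conv_append_map:
  "[0..<m + n] = [0..<m] @ map (\<lambda>l. l + m) [0..<n]"
  by (simp add: map_add_upt add.commute flip: upt_add_eq_append)

lemma fiber_prepend_block_0: "fiber (b\<^sub>1 @ b\<^sub>2) (prepend_block (length b\<^sub>1) r) 0 = b\<^sub>1"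
proof -
  have "filter (\<lambda>l. prepend_block (length b\<^sub>1) r l = 0) [0..<length (b\<^sub>1 @ b\<^sub>2)] = [0..<length b\<^sub>1]"
    by (simp add: upt_add_conv_append_map prepend_block_def filter_empty_conv comp_def)
  then show ?thesis
    by (auto simp: fiber_def nth_append intro: nth_equalityI)
qed

lemma fiber_prepend_block_Suc:
  "fiber (b\<^sub>1 @ b\<^sub>2) (prepend_block (length b\<^sub>1) r) (Suc j) = fiber b\<^sub>2 r j"
proof -
  have "filter (\<lambda>l. prepend_block (length b\<^sub>1) r l = Suc j) [0..<length (b\<^sub>1 @ b\<^sub>2)]
      = map (\<lambda>l. l + length b\<^sub>1) (filter (\<lambda>l. r l = j) [0..<length b\<^sub>2])"
    by (simp add: upt_add_conv_append_map prepend_block_def filter_empty_conv filter_map comp_def)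
  then show ?thesis
    by (simp add: fiber_def nth_append)
qed

lemma sum_fiber_comp:
  assumes "\<forall>l<length b. r l < (n::nat)"
  shows "(\<Sum>l | l < length b \<and> q (r l) = j. h l)
       = (\<Sum>k | k < n \<and> q k = j. \<Sum>l | l < length b \<and> r l = k. h l)"
proof -
  let ?S = "{l. l < length b \<and> q (r l) = j}" and ?T = "{k. k < n \<and> q k = j}"
  have "r ` ?S \<subseteq> ?T" using assms by auto
  moreover have "finite ?T" by simp
  ultimately have "sum h ?S = (\<Sum>k\<in>?T. sum h {l \<in> ?S. r l = k})"
    by (intro sum.group[symmetric]) auto
  also have "\<dots> = (\<Sum>k\<in>?T. \<Sum>l | l < length b \<and> r l = k. h l)"
    by (intro sum.cong) (auto intro!: sum.cong)
  finally show ?thesis .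
qed

lemma length_fiber_comp:
  assumes "\<forall>l<length b. r l < length c"
  shows "length (fiber b (q \<circ> r) j) = (\<Sum>k | k < length c \<and> q k = j. length (fiber b r k))"
  unfolding length_fiber card_eq_sum comp_def by (rule sum_fiber_comp[OF assms])

lemma sum_list_fiber_comp:
  assumes "\<forall>l<length b. r l < length c"
  shows "sum_list (fiber b (q \<circ> r) j) = (\<Sum>k | k < length c \<and> q k = j. sum_list (fiber b r k))"
  unfolding sum_list_fiber comp_def by (rule sum_fiber_comp[OF assms])

lemma is_refinement_singleton: "is_partition d b \<Longrightarrow> is_refinement b [d] (\<lambda>_. 0)"
  by (simp add: is_refinement_def fiber_const)

lemma is_refinement_self: "\<forall>x\<in>set b. 0 < x \<Longrightarrow> is_refinement b b (\<lambda>l. l)"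
  by (simp add: is_refinement_def fiber_id is_partition_def)

lemma is_refinement_prepend_block:
  assumes "is_partition e b\<^sub>1" and "is_refinement b\<^sub>2 c r"
  shows "is_refinement (b\<^sub>1 @ b\<^sub>2) (e # c) (prepend_block (length b\<^sub>1) r)"
  unfolding is_refinement_def
proof (intro conjI allI impI)
  fix l assume "l < length (b\<^sub>1 @ b\<^sub>2)"
  then show "prepend_block (length b\<^sub>1) r l < length (e # c)"
    using assms(2) by (auto simp: prepend_block_def is_refinement_def)
next
  fix j assume "j < length (e # c)"
  then show "is_partition ((e # c) ! j) (fiber (b\<^sub>1 @ b\<^sub>2) (prepend_block (length b\<^sub>1) r) j)"
    using assms
    by (cases j) (auto simp: fiber_prepend_block_0 fiber_prepend_block_Suc is_refinement_def)
qed

lemma is_refinement_comp: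
  assumes pos: "\<forall>x\<in>set b. 0 < x" and r: "is_refinement b c' r" and q: "is_refinement c' c q"
  shows "is_refinement b c (q \<circ> r)"
  unfolding is_refinement_def
proof (intro conjI allI impI)
  have r_range: "\<forall>l<length b. r l < length c'"
    using r by (simp add: is_refinement_def)
  fix l assume "l < length b"
  then show "(q \<circ> r) l < length c"
    using r_range q by (simp add: is_refinement_def)
next
  have r_range: "\<forall>l<length b. r l < length c'"
    using r by (simp add: is_refinement_def)
  fix j assume j: "j < length c"
  have "sum_list (fiber b (q \<circ> r) j) = (\<Sum>k | k < length c' \<and> q k = j. sum_list (fiber b r k))"
    by (rule sum_list_fiber_comp[OF r_range])
  also have "\<dots> = (\<Sum>k | k < length c' \<and> q k = j. c' ! k)"
    using r by (intro sum.cong) (auto simp: is_refinement_def is_partition_def)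
  also have "\<dots> = c ! j"
    using q j by (simp add: is_refinement_def is_partition_def sum_list_fiber)
  finally show "is_partition (c ! j) (fiber b (q \<circ> r) j)"
    using pos set_fiber_subset[of b "q \<circ> r" j] by (auto simp: is_partition_def)
qed

lemma equal_sum_prefixes:
  fixes a b :: "nat list"
  assumes "\<forall>x\<in>set a. 0 < x" and "\<forall>y\<in>set b. 0 < y" and "sum_list a = sum_list b"
    and "sum_list a + k \<le> length a + length b"
  shows "\<exists>a\<^sub>1 a\<^sub>2 b\<^sub>1 b\<^sub>2. a = a\<^sub>1 @ a\<^sub>2 \<and> b = b\<^sub>1 @ b\<^sub>2 \<and> sum_list a\<^sub>1 = sum_list b\<^sub>1
           \<and> length a\<^sub>1 + length b\<^sub>1 = sum_list a\<^sub>1 + k"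
  using assms
proof (induction "sum_list a" arbitrary: a b k rule: less_induct)
  case less
  show ?case
  proof (cases "k = 0")
    case True
    then show ?thesis by (intro exI[of _ "[]"] exI[of _ a] exI[of _ "[]"] exI[of _ b]) simp
  next
    case False
    have step: "\<exists>a\<^sub>1 a\<^sub>2 b\<^sub>1 b\<^sub>2. x # as = a\<^sub>1 @ a\<^sub>2 \<and> y # bs = b\<^sub>1 @ b\<^sub>2 \<and> sum_list a\<^sub>1 = sum_list b\<^sub>1
                \<and> length a\<^sub>1 + length b\<^sub>1 = sum_list a\<^sub>1 + k"
      if "x \<le> y" and pos_as: "\<forall>z\<in>set (x # as). 0 < z" and pos_bs: "\<forall>z\<in>set (y # bs). 0 < z"
        and sum_as: "x + sum_list as = sum_list a" and sum_bs: "y + sum_list bs = sum_list a"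
        and bound: "sum_list a + k \<le> length as + length bs + 2"
      for x y as bs
    proof -
      have "0 < x" and less_sum: "sum_list as < sum_list a"
        using pos_as sum_as by auto
      show ?thesis
      proof (cases "x = y")
        case True
        have "\<exists>a\<^sub>1 a\<^sub>2 b\<^sub>1 b\<^sub>2. as = a\<^sub>1 @ a\<^sub>2 \<and> bs = b\<^sub>1 @ b\<^sub>2 \<and> sum_list a\<^sub>1 = sum_list b\<^sub>1
                \<and> length a\<^sub>1 + length b\<^sub>1 = sum_list a\<^sub>1 + (k + x - 2)"
          by (rule less.hyps[OF less_sum])
            (use pos_as pos_bs sum_as sum_bs bound True \<open>k \<noteq> 0\<close> \<open>0 < x\<close> in auto)
        then obtain a\<^sub>1 a\<^sub>2 b\<^sub>1 b\<^sub>2 where "as = a\<^sub>1 @ a\<^sub>2" and "bs = b\<^sub>1 @ b\<^sub>2"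
          and "sum_list a\<^sub>1 = sum_list b\<^sub>1"
          and "length a\<^sub>1 + length b\<^sub>1 = sum_list a\<^sub>1 + (k + x - 2)"
          by blast
        then show ?thesis
          using True \<open>k \<noteq> 0\<close> \<open>0 < x\<close>
          by (intro exI[of _ "x # a\<^sub>1"] exI[of _ a\<^sub>2] exI[of _ "y # b\<^sub>1"] exI[of _ b\<^sub>2]) auto
      next
        case False
        \<comment> \<open>split the part y of b into x and y - x\<close>
        have "\<exists>a\<^sub>1 a\<^sub>2 b\<^sub>1 b\<^sub>2. as = a\<^sub>1 @ a\<^sub>2 \<and> (y - x) # bs = b\<^sub>1 @ b\<^sub>2
                \<and> sum_list a\<^sub>1 = sum_list b\<^sub>1 \<and> length a\<^sub>1 + length b\<^sub>1 = sum_list a\<^sub>1 + (k + x - 1)"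
        proof (rule less.hyps[OF less_sum])
          show "\<forall>z\<in>set as. 0 < z" and "\<forall>z\<in>set ((y - x) # bs). 0 < z"
            using pos_as pos_bs \<open>x \<le> y\<close> False by auto
          show "sum_list as = sum_list ((y - x) # bs)"
            using sum_as sum_bs \<open>x \<le> y\<close> by simp
          show "sum_list as + (k + x - 1) \<le> length as + length ((y - x) # bs)"
            using bound sum_as \<open>0 < x\<close> by simp
        qed
        then obtain a\<^sub>1 a\<^sub>2 b\<^sub>1 b\<^sub>2 where as: "as = a\<^sub>1 @ a\<^sub>2" and bs: "(y - x) # bs = b\<^sub>1 @ b\<^sub>2"
          and sums: "sum_list a\<^sub>1 = sum_list b\<^sub>1"
          and lengths: "length a\<^sub>1 + length b\<^sub>1 = sum_list a\<^sub>1 + (k + x - 1)"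
          by blast
        have "b\<^sub>1 \<noteq> []"
          using sums lengths pos_as as \<open>k \<noteq> 0\<close> \<open>0 < x\<close> positive_sum_list_eq_0_iff[of a\<^sub>1] by auto
        then obtain b\<^sub>1' where "b\<^sub>1 = (y - x) # b\<^sub>1'" and "bs = b\<^sub>1' @ b\<^sub>2"
          using bs by (cases b\<^sub>1) auto
        then show ?thesis
          using as sums lengths \<open>x \<le> y\<close> \<open>k \<noteq> 0\<close> \<open>0 < x\<close>
          by (intro exI[of _ "x # a\<^sub>1"] exI[of _ a\<^sub>2] exI[of _ "y # b\<^sub>1'"] exI[of _ b\<^sub>2]) auto
      qed
    qed
    have "a \<noteq> []" and "b \<noteq> []"
      using less.prems False positive_sum_list_eq_0_iff[of a] positive_sum_list_eq_0_iff[of b]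
      by auto
    then obtain x as y bs where a: "a = x # as" and b: "b = y # bs"
      by (meson list.exhaust)
    show ?thesis
    proof (cases "x \<le> y")
      case True
      then show ?thesis
        using step[of x y as bs] less.prems a b by simp
    next
      case False
      have "\<exists>b\<^sub>1 b\<^sub>2 a\<^sub>1 a\<^sub>2. y # bs = b\<^sub>1 @ b\<^sub>2 \<and> x # as = a\<^sub>1 @ a\<^sub>2 \<and> sum_list b\<^sub>1 = sum_list a\<^sub>1
              \<and> length b\<^sub>1 + length a\<^sub>1 = sum_list b\<^sub>1 + k"
      proof (rule step)
        show "y \<le> x" using False by simp
        show "\<forall>z\<in>set (y # bs). 0 < z" and "\<forall>z\<in>set (x # as). 0 < z"
          using less.prems(1,2) a b by simp_all
        show "y + sum_list bs = sum_list a" and "x + sum_list as = sum_list a"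
          and "sum_list a + k \<le> length bs + length as + 2"
          using less.prems(3,4) a b by simp_all
      qed
      then show ?thesis
        unfolding a b by (metis add.commute)
    qed
  qed
qed

lemma two_partitions_common_coarsening:
  assumes "is_partition d a" and "is_partition d b" and "d < length a + length b"
  shows "\<exists>c r q. is_partition d c \<and> length c + d = length a + length b
           \<and> is_refinement a c r \<and> is_refinement b c q
           \<and> (\<forall>j<length c. length (fiber a r j) + length (fiber b q j) = c ! j + 1)"
  using assms
proof (induction "length a" arbitrary: a b d rule: less_induct)
  case less
  have pos_a: "\<forall>x\<in>set a. 0 < x" and pos_b: "\<forall>x\<in>set b. 0 < x"
    and sum_a: "sum_list a = d" and sum_b: "sum_list b = d"
    using less.prems by (auto simp: is_partition_def)
  show ?case
  proof (cases "length a + length b = d + 1")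
    case True
    have "0 < d"
      using True pos_a pos_b sum_a sum_b positive_sum_list_eq_0_iff[of a]
        positive_sum_list_eq_0_iff[of b] by auto
    then show ?thesis
      using True less.prems
      by (intro exI[of _ "[d]"] exI[of _ "\<lambda>_. 0"])
        (simp add: is_refinement_singleton fiber_const is_partition_def)
  next
    case False
    obtain a\<^sub>1 a\<^sub>2 b\<^sub>1 b\<^sub>2 where a: "a = a\<^sub>1 @ a\<^sub>2" and b: "b = b\<^sub>1 @ b\<^sub>2"
      and sums: "sum_list a\<^sub>1 = sum_list b\<^sub>1"
      and lengths: "length a\<^sub>1 + length b\<^sub>1 = sum_list a\<^sub>1 + 1"
      using equal_sum_prefixes[OF pos_a pos_b, of 1] sum_a sum_b less.prems(3) by auto
    define e where "e = sum_list a\<^sub>1"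
    have "a\<^sub>1 \<noteq> []"
      using lengths sums pos_b b positive_sum_list_eq_0_iff[of b\<^sub>1] by auto
    moreover have "\<forall>x\<in>set a\<^sub>1. 0 < x"
      using pos_a a by simp
    ultimately have "0 < e"
      using positive_sum_list_eq_0_iff[of a\<^sub>1] by (metis e_def gr0I)
    have block_a: "is_partition e a\<^sub>1" and block_b: "is_partition e b\<^sub>1"
      using pos_a pos_b a b sums by (auto simp: is_partition_def e_def)
    have rest_a: "is_partition (d - e) a\<^sub>2" and rest_b: "is_partition (d - e) b\<^sub>2"
      using pos_a pos_b sum_a sum_b a b sums by (auto simp: is_partition_def e_def)
    have "d - e < length a\<^sub>2 + length b\<^sub>2"
      using less.prems(3) False a b lengths sum_a by (simp add: e_def)
    then obtain c r q where c: "is_partition (d - e) c" "length c + (d - e) = length a\<^sub>2 + length b\<^sub>2"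
        and r: "is_refinement a\<^sub>2 c r" and q: "is_refinement b\<^sub>2 c q"
        and fibres: "\<forall>j<length c. length (fiber a\<^sub>2 r j) + length (fiber b\<^sub>2 q j) = c ! j + 1"
      using less.hyps[of a\<^sub>2 "d - e" b\<^sub>2] rest_a rest_b a \<open>a\<^sub>1 \<noteq> []\<close> by auto
    have "e \<le> d" using sum_a a by (simp add: e_def)
    show ?thesis
    proof (intro exI conjI allI impI)
      show "is_partition d (e # c)"
        using c(1) \<open>0 < e\<close> \<open>e \<le> d\<close> by (auto simp: is_partition_def)
      show "length (e # c) + d = length a + length b"
        using c(2) a b lengths \<open>e \<le> d\<close> by (simp add: e_def)
      show "is_refinement a (e # c) (prepend_block (length a\<^sub>1) r)"
        using is_refinement_prepend_block[OF block_a r] a by simp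
      show "is_refinement b (e # c) (prepend_block (length b\<^sub>1) q)"
        using is_refinement_prepend_block[OF block_b q] b by simp
      fix j assume "j < length (e # c)"
      then show "length (fiber a (prepend_block (length a\<^sub>1) r) j)
          + length (fiber b (prepend_block (length b\<^sub>1) q) j) = (e # c) ! j + 1"
        using a b lengths fibres
        by (cases j) (simp_all add: fiber_prepend_block_0 fiber_prepend_block_Suc e_def)
    qed
  qed
qed

lemma sum_length_fiber_comp:
  assumes r: "\<forall>i\<in>I. is_refinement (a i) c' (r i)" and q: "is_refinement c' c q"
    and j: "j < length c"
    and counts: "\<forall>k<length c'. (\<Sum>i\<in>I. length (fiber (a i) (r i) k)) = c' ! k * n + 1"
  shows "(\<Sum>i\<in>I. length (fiber (a i) (q \<circ> r i) j)) = c ! j * n + length (fiber c' q j)"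
proof -
  let ?K = "{k. k < length c' \<and> q k = j}"
  have "(\<Sum>i\<in>I. length (fiber (a i) (q \<circ> r i) j))
      = (\<Sum>i\<in>I. \<Sum>k\<in>?K. length (fiber (a i) (r i) k))"
    using r by (intro sum.cong refl length_fiber_comp) (simp add: is_refinement_def)
  also have "\<dots> = (\<Sum>k\<in>?K. \<Sum>i\<in>I. length (fiber (a i) (r i) k))"
    by (rule sum.swap)
  also have "\<dots> = (\<Sum>k\<in>?K. c' ! k * n + 1)"
    using counts by (intro sum.cong) auto
  also have "\<dots> = (\<Sum>k\<in>?K. c' ! k) * n + card ?K"
    by (simp only: sum.distrib sum_distrib_right card_eq_sum)
  also have "(\<Sum>k\<in>?K. c' ! k) = c ! j"
    using q j by (simp add: is_refinement_def is_partition_def sum_list_fiber)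
  also have "card ?K = length (fiber c' q j)"
    by (simp add: length_fiber)
  finally show ?thesis .
qed

lemma common_coarsening:
  assumes "\<forall>i\<le>n. is_partition d (a i)" and "d * n < (\<Sum>i\<le>n. length (a i))"
  shows "\<exists>c r. is_partition d c \<and> length c + d * n = (\<Sum>i\<le>n. length (a i))
           \<and> (\<forall>i\<le>n. is_refinement (a i) c (r i))
           \<and> (\<forall>j<length c. (\<Sum>i\<le>n. length (fiber (a i) (r i) j)) = c ! j * n + 1)"
  using assms
proof (induction n)
  case 0
  then have "is_partition d (a 0)" by simp
  then show ?case
    by (intro exI[of _ "a 0"] exI[of _ "\<lambda>_ l. l"])
      (simp add: is_refinement_self fiber_id is_partition_def)
next
  case (Suc n)
  have last: "is_partition d (a (Suc n))"
    using Suc.prems(1) by simp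
  then have "length (a (Suc n)) \<le> d"
    using length_le_sum_list by (auto simp: is_partition_def)
  then obtain c' r' where c': "is_partition d c'"
      and length_c': "length c' + d * n = (\<Sum>i\<le>n. length (a i))"
      and r': "\<forall>i\<le>n. is_refinement (a i) c' (r' i)"
      and counts: "\<forall>k<length c'. (\<Sum>i\<le>n. length (fiber (a i) (r' i) k)) = c' ! k * n + 1"
    using Suc by auto
  have "d < length c' + length (a (Suc n))"
    using length_c' Suc.prems(2) by simp
  then obtain c q s where c: "is_partition d c"
      and length_c: "length c + d = length c' + length (a (Suc n))"
      and q: "is_refinement c' c q" and s: "is_refinement (a (Suc n)) c s"
      and fibres: "\<forall>j<length c. length (fiber c' q j) + length (fiber (a (Suc n)) s j) = c ! j + 1"
    using two_partitions_common_coarsening[OF c' last] by blast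
  define r where "r i = (if i = Suc n then s else q \<circ> r' i)" for i
  show ?case
  proof (intro exI[of _ c] exI[of _ r] conjI allI impI)
    show "is_partition d c" by (fact c)
    show "length c + d * Suc n = (\<Sum>i\<le>Suc n. length (a i))"
      using length_c length_c' by simp
  next
    fix i assume "i \<le> Suc n"
    then show "is_refinement (a i) c (r i)"
      using s r' Suc.prems(1) is_refinement_comp[OF _ _ q]
      by (cases "i = Suc n") (auto simp: r_def is_partition_def)
  next
    fix j assume "j < length c"
    then have "(\<Sum>i\<le>n. length (fiber (a i) (r i) j)) = c ! j * n + length (fiber c' q j)"
      using sum_length_fiber_comp[OF _ q _ counts] r' by (simp add: r_def)
    then show "(\<Sum>i\<le>Suc n. length (fiber (a i) (r i) j)) = c ! j * Suc n + 1"
      using fibres \<open>j < length c\<close> by (simp add: r_def)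
  qed
qed

theorem lemma5p6:
  fixes d m :: nat and a :: "nat \<Rightarrow> nat list"
  assumes "0 < d" and "0 < m"
    and "\<forall>i<m. is_partition d (a i)"
    and "(\<Sum>i<m. int (length (a i))) - int d * (int m - 1) \<ge> 1"
  shows "\<exists>c r. is_partition d c
           \<and> int (length c) = (\<Sum>i<m. int (length (a i))) - int d * (int m - 1)
           \<and> (\<forall>i<m. is_refinement (a i) c (r i))
           \<and> (\<forall>j<length c. (\<Sum>i<m. length (fiber (a i) (r i) j)) = c ! j * (m - 1) + 1)"
proof -
  obtain n where m: "m = Suc n"
    using assms(2) by (cases m) auto
  have parts: "\<forall>i\<le>n. is_partition d (a i)"
    using assms(3) by (simp add: m less_Suc_eq_le)
  have "int (d * n) < int (\<Sum>i\<le>n. length (a i))"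
    using assms(4) by (simp add: m lessThan_Suc_atMost)
  then have "d * n < (\<Sum>i\<le>n. length (a i))"
    by (simp only: of_nat_less_iff)
  then obtain c r where c: "is_partition d c"
      and length_c: "length c + d * n = (\<Sum>i\<le>n. length (a i))"
      and r: "\<forall>i\<le>n. is_refinement (a i) c (r i)"
      and counts: "\<forall>j<length c. (\<Sum>i\<le>n. length (fiber (a i) (r i) j)) = c ! j * n + 1"
    using common_coarsening[OF parts] by blast
  have "int (length c) = (\<Sum>i<m. int (length (a i))) - int d * (int m - 1)"
    using arg_cong[OF length_c, of int] by (simp add: m lessThan_Suc_atMost algebra_simps)
  then show ?thesis
    using c r counts by (intro exI[of _ c] exI[of _ r]) (simp add: m lessThan_Suc_atMost)
qed

end
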